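(* Let $k\in\mathbb N$. Every $k$-ary dependency notion $\mathbf D$ is $\gamma$-bounded for $\gamma(n)=n^k$; that is, for every finite structure $\mathfrak M$ with domain $M$, every team $X$ and every $k$-tuple $\vec v$ of variables in the domain of $X$, if $\mathfrak M\models_X\mathbf D\vec v$ then there is $Y\subseteq X$ with $|Y|\le|M|^k$ and $\mathfrak M\models_Y\mathbf D\vec v$.
   Context: For a structure $\mathfrak M$ with domain $M$, a team $X$ is a set of assignments $s:V\to M$, $V$ a finite set of variables; for a tuple $\vec v$ in $V$, $X(\vec v)=\{s(\vec v):s\in X\}$. A $k$-ary dependency notion $\mathbf D$ is an isomorphism-closed class of structures $(M,R)$ with $R$ a $k$-ary relation on $M$, and $\mathfrak M\models_X\mathbf D\vec v$ iff $(M,X(\vec v))\in\mathbf D$. *)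

theory Defs
  imports Main
begin

definition team :: "'a set \<Rightarrow> 'v set \<Rightarrow> ('v \<rightharpoonup> 'a) set \<Rightarrow> bool" where
  "team M V X \<longleftrightarrow> finite V \<and> (\<forall>s\<in>X. dom s = V \<and> ran s \<subseteq> M)"

text \<open>X(v) = {s(v) : s in X}; k-tuples are lists of length k.\<close>
definition team_rel :: "('v \<rightharpoonup> 'a) set \<Rightarrow> 'v list \<Rightarrow> 'a list set" where
  "team_rel X vs = {map (\<lambda>x. the (s x)) vs | s. s \<in> X}"

definition dependency_notion :: "nat \<Rightarrow> ('a set \<times> 'a list set) set \<Rightarrow> bool" where
  "dependency_notion k D \<longleftrightarrow>
     (\<forall>M R. (M, R) \<in> D \<longrightarrow> R \<subseteq> {xs. length xs = k \<and> set xs \<subseteq> M}) \<and>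
     (\<forall>M R M' f. (M, R) \<in> D \<longrightarrow> bij_betw f M M' \<longrightarrow> (M', map f ` R) \<in> D)"

definition dep_sat :: "('a set \<times> 'a list set) set \<Rightarrow> 'a set \<Rightarrow> ('v \<rightharpoonup> 'a) set \<Rightarrow> 'v list \<Rightarrow> bool" where
  "dep_sat D M X vs \<longleftrightarrow> (M, team_rel X vs) \<in> D"

end

theory Submission
  imports Defs
begin

text \<open>Whether a team satisfies \<open>\<D> v\<close> depends only on the relation \<open>X(v)\<close>, so it suffices to
  keep one assignment per tuple of \<open>X(v)\<close>. Since \<open>\<D>\<close> consists of \<open>k\<close>-ary relations on \<open>M\<close>,
  there are at most \<open>|M|\<^sup>k\<close> such tuples.\<close>

lemma team_rel_eq_image: "team_rel X vs = (\<lambda>s. map (\<lambda>x. the (s x)) vs) ` X"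
  by (auto simp: team_rel_def)

lemma subteam_same_team_rel:
  obtains Y where "Y \<subseteq> X" "team_rel Y vs = team_rel X vs" "card Y = card (team_rel X vs)"
proof -
  let ?f = "\<lambda>s. map (\<lambda>x. the (s x)) vs"
  obtain Y where "Y \<subseteq> X" "inj_on ?f Y" "?f ` X = ?f ` Y"
    using subset_image_inj[of "?f ` X" ?f X] by blast
  then show thesis
    by (intro that) (simp_all add: team_rel_eq_image card_image)
qed

lemma card_le_of_dependency_notion:
  assumes "dependency_notion k D" "finite M" "(M, R) \<in> D"
  shows "card R \<le> card M ^ k"
proof -
  have "R \<subseteq> {xs. set xs \<subseteq> M \<and> length xs = k}"
    using assms(1,3) unfolding dependency_notion_def by blast
  from card_mono[OF finite_lists_length_eq[OF \<open>finite M\<close>] this] show ?thesis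
    by (simp add: card_lists_length_eq[OF \<open>finite M\<close>])
qed

theorem mainTheorem12:
  fixes k :: nat and D :: "('a set \<times> 'a list set) set" and M :: "'a set"
    and V :: "'v set" and X :: "('v \<rightharpoonup> 'a) set" and vs :: "'v list"
  assumes "dependency_notion k D"
    and "finite M"
    and "team M V X"
    and "length vs = k" and "set vs \<subseteq> V"
    and "dep_sat D M X vs"
  shows "\<exists>Y\<subseteq>X. card Y \<le> card M ^ k \<and> dep_sat D M Y vs"
proof -
  obtain Y where Y: "Y \<subseteq> X" "team_rel Y vs = team_rel X vs" "card Y = card (team_rel X vs)"
    by (rule subteam_same_team_rel)
  have "(M, team_rel X vs) \<in> D"
    using assms(6) by (simp add: dep_sat_def)
  with Y assms(1,2) show ?thesis
    by (metis card_le_of_dependency_notion dep_sat_def)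
qed

end
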